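(* Let $(\mathcal X,d)$ be a distance space, $k$ a positive integer, and suppose $\mathcal X$ has a nice $k$-clustering $\mathcal C=\{C_1,\ldots,C_k\}$. Let $x_1,x_2,\ldots$ be any sequence of distinct points of $\mathcal X$, processed by the incremental algorithm with extra centers (parameter $k$). Then for each $t$, the set $T_t$ has at most $2^{k-1}$ points and contains at least one point of $C_i$ for every $i$ with $C_i\cap\{x_1,\ldots,x_t\}\neq\emptyset$.
   Context: A distance space $(\mathcal X,d)$ is a set with a symmetric function $d:\mathcal X\times\mathcal X\to\mathbb R_{\ge0}$ with $d(x,x)=0$. A clustering of $\mathcal X$ is a set of nonempty, pairwise disjoint subsets whose union is $\mathcal X$; a $k$-clustering has exactly $k$ clusters. Write $x\sim_{\mathcal C}y$ if $x,y$ are in the same cluster and $x\not\sim_{\mathcal C}y$ otherwise. $\mathcal C$ is nice if for all $x,y,z\in\mathcal X$: $d(y,x)<d(z,x)$ whenever $x\sim_{\mathcal C}y$ and $x\not\sim_{\mathcal C}z$. Single linkage on a finite $S$ builds a rooted binary tree: start with one leaf per point of $S$; repeatedly pick two current clusters $A,B$ minimizing $\min_{a\in A,b\in B}d(a,b)$ (any tie-breaking) and make them children of a new node representing $A\cup B$, until one cluster remains (the root). $\textsc{Candidates}(S)$ with parameter $k$: run single linkage on $S$; assign each leaf its point; bottom-up, assign each internal node the point of one of its children; return all points assigned to nodes at depth $<k$ (root at depth $0$). Incremental algorithm with extra centers (parameter $k$): $T_0=\emptyset$; for $t=1,2,\ldots$: receive $x_t$, set $T_t=T_{t-1}\cup\{x_t\}$,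 and if $|T_t|>2^{k-1}$ replace $T_t$ by $\textsc{Candidates}(T_t)$. *)

theory Defs
  imports Complex_Main
begin

definition distance_space :: "('a \<Rightarrow> 'a \<Rightarrow> real) \<Rightarrow> bool" where
  "distance_space d \<longleftrightarrow> (\<forall>x y. d x y = d y x) \<and> (\<forall>x y. d x y \<ge> 0) \<and> (\<forall>x. d x x = 0)"

text \<open>A clustering of the whole space (the carrier is the universe of type 'a).\<close>
definition is_clustering :: "'a set set \<Rightarrow> bool" where
  "is_clustering \<C> \<longleftrightarrow> (\<forall>C\<in>\<C>. C \<noteq> {}) \<and>
     (\<forall>C\<in>\<C>. \<forall>D\<in>\<C>. C \<noteq> D \<longrightarrow> C \<inter> D = {}) \<and> \<Union>\<C> = UNIV"

definition is_k_clustering :: "nat \<Rightarrow> 'a set set \<Rightarrow> bool" where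
  "is_k_clustering k \<C> \<longleftrightarrow> is_clustering \<C> \<and> finite \<C> \<and> card \<C> = k"

definition same_cluster :: "'a set set \<Rightarrow> 'a \<Rightarrow> 'a \<Rightarrow> bool" where
  "same_cluster \<C> x y \<longleftrightarrow> (\<exists>C\<in>\<C>. x \<in> C \<and> y \<in> C)"

definition nice :: "('a \<Rightarrow> 'a \<Rightarrow> real) \<Rightarrow> 'a set set \<Rightarrow> bool" where
  "nice d \<C> \<longleftrightarrow> (\<forall>x y z. same_cluster \<C> x y \<and> \<not> same_cluster \<C> x z \<longrightarrow> d y x < d z x)"

datatype 'a sltree = Leaf 'a | Node "'a sltree" "'a sltree"

fun leaves :: "'a sltree \<Rightarrow> 'a set" where
  "leaves (Leaf x) = {x}"
| "leaves (Node l r) = leaves l \<union> leaves r"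

definition link :: "('a \<Rightarrow> 'a \<Rightarrow> real) \<Rightarrow> 'a sltree \<Rightarrow> 'a sltree \<Rightarrow> real" where
  "link d A B = Min {d a b | a b. a \<in> leaves A \<and> b \<in> leaves B}"

text \<open>\<open>sl_run d F t\<close>: starting from the forest F of current clusters, single linkage
  (with some tie-breaking) ends in the root tree t.\<close>
inductive sl_run :: "('a \<Rightarrow> 'a \<Rightarrow> real) \<Rightarrow> 'a sltree set \<Rightarrow> 'a sltree \<Rightarrow> bool"
  for d where
  sl_done: "sl_run d {t} t"
| sl_step: "\<lbrakk> A \<in> F; B \<in> F; A \<noteq> B;
             \<forall>A'\<in>F. \<forall>B'\<in>F. A' \<noteq> B' \<longrightarrow> link d A B \<le> link d A' B';
             sl_run d (insert (Node A B) (F - {A, B})) t \<rbrakk> \<Longrightarrow> sl_run d F t"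

definition single_linkage :: "('a \<Rightarrow> 'a \<Rightarrow> real) \<Rightarrow> 'a set \<Rightarrow> 'a sltree \<Rightarrow> bool" where
  "single_linkage d S t \<longleftrightarrow> sl_run d (Leaf ` S) t"

datatype 'a atree = ALeaf 'a | ANode 'a "'a atree" "'a atree"

fun apoint :: "'a atree \<Rightarrow> 'a" where
  "apoint (ALeaf x) = x"
| "apoint (ANode p l r) = p"

fun shape :: "'a atree \<Rightarrow> 'a sltree" where
  "shape (ALeaf x) = Leaf x"
| "shape (ANode p l r) = Node (shape l) (shape r)"

fun valid_assign :: "'a atree \<Rightarrow> bool" where
  "valid_assign (ALeaf x) = True"
| "valid_assign (ANode p l r) \<longleftrightarrow> valid_assign l \<and> valid_assign r \<and> (p = apoint l \<or> p = apoint r)"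

text \<open>Points assigned to nodes at depth < n (root at depth 0).\<close>
fun pts_above :: "nat \<Rightarrow> 'a atree \<Rightarrow> 'a set" where
  "pts_above 0 t = {}"
| "pts_above (Suc n) (ALeaf x) = {x}"
| "pts_above (Suc n) (ANode p l r) = {p} \<union> pts_above n l \<union> pts_above n r"

text \<open>\<open>candidates d k S C\<close>: C is a possible output of Candidates(S) (any tie-breaking,
  any assignment choices).\<close>
definition candidates :: "('a \<Rightarrow> 'a \<Rightarrow> real) \<Rightarrow> nat \<Rightarrow> 'a set \<Rightarrow> 'a set \<Rightarrow> bool" where
  "candidates d k S C \<longleftrightarrow>
     (\<exists>a. single_linkage d S (shape a) \<and> valid_assign a \<and> C = pts_above k a)"

text \<open>\<open>incr_run d k n x T\<close>: T 0, ..., T n is a possible run of the algorithm on the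
  inputs x 1, ..., x n.\<close>
definition incr_run :: "('a \<Rightarrow> 'a \<Rightarrow> real) \<Rightarrow> nat \<Rightarrow> nat \<Rightarrow> (nat \<Rightarrow> 'a) \<Rightarrow> (nat \<Rightarrow> 'a set) \<Rightarrow> bool" where
  "incr_run d k n x T \<longleftrightarrow> T 0 = {} \<and>
     (\<forall>t\<in>{1..n}. let U = insert (x t) (T (t - 1)) in
        (if card U > 2 ^ (k - 1) then candidates d k U (T t) else T t = U))"

end

theory Submission
  imports Defs
begin

(*
  Fix a nice clustering \<C> and a set S of points fed to single linkage.
  Call a set X of points "closed" if, whenever X meets a cluster C, it contains all of C \<inter> S.
  Niceness forces every merge of single linkage to have the following shape: the two merged
  trees either lie inside one cluster together, or each of them is closed.  (If A is not
  closed, the nearest point outside A lies in A's own cluster, so the closest tree B must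
  meet that cluster.)  Hence the final tree "respects the clusters" at every internal node.

  In such a tree the clusters met by the two children of a node that is not inside a single
  cluster are disjoint.  Descending from the root, a tree meeting at most j clusters therefore
  has, at depth < j, a node whose assigned point lies in any prescribed cluster it meets.  With
  j = k this shows that Candidates keeps a point of every cluster met by its input, while a
  binary tree has at most 2^(k-1) distinct points assigned at depth < k (each node's point is one
  of its children's points).  These two facts make up the correctness of Candidates; the theorem
  then follows by induction on t along the run of the incremental algorithm.
*)

lemma finite_leaves: "finite (leaves t)"
  by (induction t) auto

lemma leaves_nonempty: "leaves t \<noteq> {}"
  by (induction t) auto

text \<open>The set underlying link, written as a finite image so that the lemmas about Min apply.\<close>
lemma link_as_image:
  "{d a b | a b. a \<in> leaves A \<and> b \<in> leaves B} = (\<lambda>(a, b). d a b) ` (leaves A \<times> leaves B)"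
  by auto

lemma link_le: "a \<in> leaves A \<Longrightarrow> b \<in> leaves B \<Longrightarrow> link d A B \<le> d a b"
  unfolding link_def link_as_image by (rule Min_le) (auto simp: finite_leaves)

lemma link_attained: "\<exists>a\<in>leaves A. \<exists>b\<in>leaves B. link d A B = d a b"
proof -
  have "link d A B \<in> (\<lambda>(a, b). d a b) ` (leaves A \<times> leaves B)"
    unfolding link_def link_as_image
    by (rule Min_in) (auto simp: finite_leaves leaves_nonempty)
  then show ?thesis by auto
qed

lemma link_sym:
  assumes "\<And>x y. d x y = d y x"
  shows "link d A B = link d B A"
proof -
  have "{d a b | a b. a \<in> leaves A \<and> b \<in> leaves B} = {d a b | a b. a \<in> leaves B \<and> b \<in> leaves A}"
    using assms by blast
  then show ?thesis unfolding link_def by simp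
qed

lemma cluster_unique:
  "is_clustering \<C> \<Longrightarrow> C \<in> \<C> \<Longrightarrow> D \<in> \<C> \<Longrightarrow> x \<in> C \<Longrightarrow> x \<in> D \<Longrightarrow> C = D"
  unfolding is_clustering_def by blast

definition within_cluster :: "'a set set \<Rightarrow> 'a set \<Rightarrow> bool" where
  "within_cluster \<C> X \<longleftrightarrow> (\<exists>C\<in>\<C>. X \<subseteq> C)"

definition cluster_closed :: "'a set set \<Rightarrow> 'a set \<Rightarrow> 'a set \<Rightarrow> bool" where
  "cluster_closed \<C> S X \<longleftrightarrow> (\<forall>C\<in>\<C>. C \<inter> X \<noteq> {} \<longrightarrow> C \<inter> S \<subseteq> X)"

definition clusters_met :: "'a set set \<Rightarrow> 'a set \<Rightarrow> 'a set set" where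
  "clusters_met \<C> X = {C\<in>\<C>. C \<inter> X \<noteq> {}}"

lemma card_clusters_met_pos:
  assumes "is_clustering \<C>" and "finite \<C>" and "X \<noteq> {}"
  shows "card (clusters_met \<C> X) > 0"
proof -
  obtain y where "y \<in> X" using assms(3) by blast
  moreover obtain C where "C \<in> \<C>" "y \<in> C"
    using assms(1) unfolding is_clustering_def by blast
  ultimately have "C \<in> clusters_met \<C> X" unfolding clusters_met_def by blast
  moreover have "finite (clusters_met \<C> X)" using assms(2) unfolding clusters_met_def by simp
  ultimately show ?thesis by (auto simp: card_gt_0_iff)
qed

lemma clusters_met_disjoint:
  assumes "cluster_closed \<C> S X" and "Y \<subseteq> S" and "X \<inter> Y = {}"
  shows "clusters_met \<C> X \<inter> clusters_met \<C> Y = {}"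
  using assms unfolding clusters_met_def cluster_closed_def by blast

fun respects_clusters :: "'a set set \<Rightarrow> 'a set \<Rightarrow> 'a sltree \<Rightarrow> bool" where
  "respects_clusters \<C> S (Leaf x) = True"
| "respects_clusters \<C> S (Node l r) \<longleftrightarrow>
     respects_clusters \<C> S l \<and> respects_clusters \<C> S r \<and> leaves l \<inter> leaves r = {} \<and>
     (within_cluster \<C> (leaves l \<union> leaves r) \<or>
      cluster_closed \<C> S (leaves l) \<and> cluster_closed \<C> S (leaves r))"

lemma respects_clusters_root:
  assumes "is_clustering \<C>" and "respects_clusters \<C> S t"
  shows "within_cluster \<C> (leaves t) \<or> cluster_closed \<C> S (leaves t)"
proof (cases t)
  case (Leaf x)
  then show ?thesis
    using assms(1) unfolding is_clustering_def within_cluster_def by auto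
next
  case (Node l r)
  then show ?thesis using assms(2) by (auto simp: cluster_closed_def)
qed

section \<open>Single linkage respects a nice clustering\<close>

definition disjoint_leaves :: "'a sltree set \<Rightarrow> bool" where
  "disjoint_leaves F \<longleftrightarrow> (\<forall>X\<in>F. \<forall>Y\<in>F. X \<noteq> Y \<longrightarrow> leaves X \<inter> leaves Y = {})"

text \<open>The point of S nearest to A outside A is in
  A's cluster by niceness, so the closest cross pair between A and B ends in that cluster.\<close>
lemma merge_within_cluster:
  assumes cl: "is_clustering \<C>" and nc: "nice d \<C>" and d_sym: "\<And>x y. d x y = d y x"
    and AF: "A \<in> F" and BF: "B \<in> F" and AB: "A \<noteq> B"
    and nearest: "\<forall>A'\<in>F. A' \<noteq> A \<longrightarrow> link d A B \<le> link d A A'"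
    and dj: "disjoint_leaves F" and cover: "\<Union>(leaves ` F) = S"
    and A_within: "within_cluster \<C> (leaves A)" and A_open: "\<not> cluster_closed \<C> S (leaves A)"
    and B_ok: "within_cluster \<C> (leaves B) \<or> cluster_closed \<C> S (leaves B)"
  shows "within_cluster \<C> (leaves A \<union> leaves B)"
proof -
  obtain C where C: "C \<in> \<C>" "leaves A \<subseteq> C"
    using A_within unfolding within_cluster_def by blast
  obtain C' s where C': "C' \<in> \<C>" "C' \<inter> leaves A \<noteq> {}" "s \<in> C'" "s \<in> S" "s \<notin> leaves A"
    using A_open unfolding cluster_closed_def by blast
  have "C' = C" using C C' cluster_unique[OF cl] by blast
  obtain a b where ab: "a \<in> leaves A" "b \<in> leaves B" "link d A B = d a b"
    using link_attained[of A B d] by blast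
  obtain A' where A': "A' \<in> F" "s \<in> leaves A'" using C'(4) cover by blast
  have b_in_C: "b \<in> C"
  proof (rule ccontr)
    assume "b \<notin> C"
    then have "\<not> same_cluster \<C> a b"
      unfolding same_cluster_def using C ab cluster_unique[OF cl] by blast
    moreover have "same_cluster \<C> a s"
      unfolding same_cluster_def using C C' \<open>C' = C\<close> ab by blast
    ultimately have "d s a < d b a" using nc unfolding nice_def by blast
    moreover have "link d A B \<le> link d A A'"
      using nearest A' C'(5) by auto
    moreover have "link d A A' \<le> d a s" by (rule link_le[OF ab(1) A'(2)])
    ultimately show False using ab(3) d_sym[of a s] d_sym[of a b] by linarith
  qed
  from B_ok show ?thesis
  proof
    assume "within_cluster \<C> (leaves B)"
    then obtain D where D: "D \<in> \<C>" "leaves B \<subseteq> D" unfolding within_cluster_def by blast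
    then have "D = C" using b_in_C ab C cluster_unique[OF cl] by blast
    then show ?thesis using C D unfolding within_cluster_def by blast
  next
    assume "cluster_closed \<C> S (leaves B)"
    then have "a \<in> leaves B"
      using C b_in_C ab AF cover unfolding cluster_closed_def by blast
    moreover have "leaves A \<inter> leaves B = {}"
      using dj AF BF AB unfolding disjoint_leaves_def by blast
    ultimately show ?thesis using ab(1) by blast
  qed
qed

lemma merge_respects_clusters:
  assumes cl: "is_clustering \<C>" and nc: "nice d \<C>" and d_sym: "\<And>x y. d x y = d y x"
    and AF: "A \<in> F" and BF: "B \<in> F" and AB: "A \<noteq> B"
    and closest: "\<forall>A'\<in>F. \<forall>B'\<in>F. A' \<noteq> B' \<longrightarrow> link d A B \<le> link d A' B'"
    and resp: "\<forall>t\<in>F. respects_clusters \<C> S t"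
    and dj: "disjoint_leaves F" and cover: "\<Union>(leaves ` F) = S"
  shows "respects_clusters \<C> S (Node A B)"
proof -
  have rA: "within_cluster \<C> (leaves A) \<or> cluster_closed \<C> S (leaves A)"
    and rB: "within_cluster \<C> (leaves B) \<or> cluster_closed \<C> S (leaves B)"
    using respects_clusters_root[OF cl bspec[OF resp AF]]
      respects_clusters_root[OF cl bspec[OF resp BF]] .
  have A_nearest: "\<forall>A'\<in>F. A' \<noteq> A \<longrightarrow> link d A B \<le> link d A A'"
    using closest[rule_format, OF AF] by (metis)
  have "link d B A = link d A B" by (rule link_sym) (rule d_sym)
  then have B_nearest: "\<forall>A'\<in>F. A' \<noteq> B \<longrightarrow> link d B A \<le> link d B A'"
    using closest[rule_format, OF BF] by (metis)
  have "cluster_closed \<C> S (leaves A) \<or> within_cluster \<C> (leaves A \<union> leaves B)"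
    using merge_within_cluster[OF cl nc d_sym AF BF AB A_nearest dj cover _ _ rB] rA by blast
  moreover have "cluster_closed \<C> S (leaves B) \<or> within_cluster \<C> (leaves B \<union> leaves A)"
    using merge_within_cluster[OF cl nc d_sym BF AF AB[symmetric] B_nearest dj cover _ _ rA] rB
    by blast
  moreover have "leaves A \<inter> leaves B = {}"
    using dj AF BF AB unfolding disjoint_leaves_def by blast
  ultimately show ?thesis using resp AF BF by (simp add: Un_commute) blast
qed

lemma sl_run_respects_clusters:
  assumes cl: "is_clustering \<C>" and nc: "nice d \<C>" and d_sym: "\<And>x y. d x y = d y x"
  shows "sl_run d F t \<Longrightarrow> \<forall>u\<in>F. respects_clusters \<C> S u \<Longrightarrow> disjoint_leaves F
    \<Longrightarrow> \<Union>(leaves ` F) = S \<Longrightarrow> respects_clusters \<C> S t \<and> leaves t = S"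
proof (induction rule: sl_run.induct)
  case (sl_done t)
  then show ?case by simp
next
  case (sl_step A F B t)
  let ?F = "insert (Node A B) (F - {A, B})"
  have "respects_clusters \<C> S (Node A B)"
    using merge_respects_clusters[OF cl nc d_sym sl_step.hyps(1-4) sl_step.prems] .
  then have "\<forall>u\<in>?F. respects_clusters \<C> S u" using sl_step.prems(1) by auto
  moreover have "disjoint_leaves ?F"
    using sl_step.prems(2) sl_step.hyps(1,2) unfolding disjoint_leaves_def by (simp, blast)
  moreover have "\<Union>(leaves ` ?F) = S" using sl_step.prems(3) sl_step.hyps(1,2) by auto
  ultimately show ?case using sl_step.IH by blast
qed

corollary single_linkage_respects_clusters:
  assumes "is_clustering \<C>" and "nice d \<C>" and "\<And>x y. d x y = d y x"
    and "single_linkage d S t"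
  shows "respects_clusters \<C> S t \<and> leaves t = S"
  using sl_run_respects_clusters[OF assms(1-3), of "Leaf ` S" t S] assms(4)
  unfolding single_linkage_def disjoint_leaves_def by auto

section \<open>Points assigned near the root\<close>

lemma apoint_in_leaves: "valid_assign a \<Longrightarrow> apoint a \<in> leaves (shape a)"
  by (induction a) auto

lemma apoint_in_pts_above: "apoint a \<in> pts_above (Suc n) a"
  by (cases a) auto

text \<open>Since a node's point is one of its children's points, depth < n+1 carries at most 2^n
  distinct points.\<close>
lemma card_pts_above: "valid_assign a \<Longrightarrow> card (pts_above (Suc n) a) \<le> 2 ^ n"
proof (induction a arbitrary: n)
  case (ALeaf x)
  then show ?case by simp
next
  case (ANode p l r)
  have vl: "valid_assign l" "valid_assign r" and p: "p = apoint l \<or> p = apoint r"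
    using ANode.prems by auto
  show ?case
  proof (cases n)
    case 0
    then show ?thesis by simp
  next
    case (Suc m)
    have "pts_above (Suc n) (ANode p l r) = pts_above (Suc m) l \<union> pts_above (Suc m) r"
      using Suc p apoint_in_pts_above[of l m] apoint_in_pts_above[of r m] by auto
    also have "card \<dots> \<le> card (pts_above (Suc m) l) + card (pts_above (Suc m) r)"
      by (rule card_Un_le)
    also have "\<dots> \<le> 2 ^ n" using ANode.IH(1)[OF vl(1), of m] ANode.IH(2)[OF vl(2), of m] Suc by simp
    finally show ?thesis .
  qed
qed

text \<open>At a node that is not within one
  cluster the children meet disjoint nonempty families of clusters, so each meets at most j-1.\<close>
lemma pts_above_hits_clusters:
  assumes cl: "is_clustering \<C>" and fin: "finite \<C>"
  shows "valid_assign a \<Longrightarrow> respects_clusters \<C> S (shape a) \<Longrightarrow> leaves (shape a) \<subseteq> S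
    \<Longrightarrow> C \<in> \<C> \<Longrightarrow> C \<inter> leaves (shape a) \<noteq> {}
    \<Longrightarrow> card (clusters_met \<C> (leaves (shape a))) \<le> j \<Longrightarrow> pts_above j a \<inter> C \<noteq> {}"
proof (induction a arbitrary: j)
  case (ALeaf x)
  have "card (clusters_met \<C> {x}) > 0" by (rule card_clusters_met_pos[OF cl fin]) simp
  then obtain i where "j = Suc i" using ALeaf.prems(6) by (cases j) auto
  then show ?case using ALeaf.prems(5) by auto
next
  case (ANode p l r)
  let ?L = "leaves (shape l)" and ?R = "leaves (shape r)"
  have vl: "valid_assign l" "valid_assign r" and p: "p = apoint l \<or> p = apoint r"
    using ANode.prems(1) by auto
  have rl: "respects_clusters \<C> S (shape l)" "respects_clusters \<C> S (shape r)"
    and LR: "?L \<inter> ?R = {}"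
    and alt: "within_cluster \<C> (?L \<union> ?R) \<or> cluster_closed \<C> S ?L \<and> cluster_closed \<C> S ?R"
    using ANode.prems(2) by auto
  have LS: "?L \<subseteq> S" "?R \<subseteq> S" using ANode.prems(3) by auto
  have met_L: "card (clusters_met \<C> ?L) > 0" and met_R: "card (clusters_met \<C> ?R) > 0"
    by (rule card_clusters_met_pos[OF cl fin leaves_nonempty])+
  from alt show ?case
  proof
    assume "within_cluster \<C> (?L \<union> ?R)"
    then obtain C' where C': "C' \<in> \<C>" "?L \<union> ?R \<subseteq> C'" unfolding within_cluster_def by blast
    obtain y where "y \<in> C" "y \<in> ?L \<union> ?R" using ANode.prems(5) by auto
    then have "C = C'" using C' ANode.prems(4) cluster_unique[OF cl] by blast
    moreover have "p \<in> ?L \<union> ?R" using p apoint_in_leaves vl by auto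
    moreover have "card (clusters_met \<C> (leaves (shape (ANode p l r)))) > 0"
      by (rule card_clusters_met_pos[OF cl fin leaves_nonempty])
    then obtain i where "j = Suc i" using ANode.prems(6) by (cases j) auto
    ultimately show ?thesis using C' by auto
  next
    assume closed: "cluster_closed \<C> S ?L \<and> cluster_closed \<C> S ?R"
    have split: "clusters_met \<C> (leaves (shape (ANode p l r))) = clusters_met \<C> ?L \<union> clusters_met \<C> ?R"
      unfolding clusters_met_def by auto
    have "clusters_met \<C> ?L \<inter> clusters_met \<C> ?R = {}"
      by (rule clusters_met_disjoint[OF conjunct1[OF closed] LS(2) LR])
    then have "card (clusters_met \<C> ?L \<union> clusters_met \<C> ?R)
        = card (clusters_met \<C> ?L) + card (clusters_met \<C> ?R)"
      using fin by (intro card_Un_disjoint) (auto simp: clusters_met_def)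
    then have "card (clusters_met \<C> ?L) + card (clusters_met \<C> ?R) \<le> j"
      using ANode.prems(6) unfolding split by simp
    then obtain i where j: "j = Suc i"
      and cards: "card (clusters_met \<C> ?L) \<le> i" "card (clusters_met \<C> ?R) \<le> i"
      using met_L met_R by (cases j) auto
    have "C \<inter> ?L \<noteq> {} \<or> C \<inter> ?R \<noteq> {}" using ANode.prems(5) by auto
    then have "pts_above i l \<inter> C \<noteq> {} \<or> pts_above i r \<inter> C \<noteq> {}"
      using ANode.IH(1)[OF vl(1) rl(1) LS(1) ANode.prems(4) _ cards(1)]
        ANode.IH(2)[OF vl(2) rl(2) LS(2) ANode.prems(4) _ cards(2)] by blast
    then show ?thesis using j by auto
  qed
qed

section \<open>Correctness of Candidates and of the incremental algorithm\<close>

theorem candidates_correct: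
  assumes d_sym: "\<And>x y. d x y = d y x" and "k > 0"
    and kcl: "is_k_clustering k \<C>" and nc: "nice d \<C>"
    and cand: "candidates d k S R"
  shows "card R \<le> 2 ^ (k - 1) \<and> (\<forall>C\<in>\<C>. C \<inter> S \<noteq> {} \<longrightarrow> R \<inter> C \<noteq> {})"
proof -
  have cl: "is_clustering \<C>" and fin: "finite \<C>" and card: "card \<C> = k"
    using kcl unfolding is_k_clustering_def by auto
  obtain a where sl: "single_linkage d S (shape a)" and va: "valid_assign a"
    and R: "R = pts_above k a"
    using cand unfolding candidates_def by blast
  have resp: "respects_clusters \<C> S (shape a)" and leaves: "leaves (shape a) = S"
    using single_linkage_respects_clusters[OF cl nc d_sym sl] by auto
  have "card R \<le> 2 ^ (k - 1)"
    using card_pts_above[OF va, of "k - 1"] R \<open>k > 0\<close> by simp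
  moreover have "clusters_met \<C> S \<subseteq> \<C>" unfolding clusters_met_def by blast
  then have "card (clusters_met \<C> S) \<le> k" using card_mono[OF fin] card by blast
  then have "R \<inter> C \<noteq> {}" if "C \<in> \<C>" "C \<inter> S \<noteq> {}" for C
    using pts_above_hits_clusters[OF cl fin va resp, of C k] that leaves R by simp
  ultimately show ?thesis by blast
qed

theorem mainTheorem8:
  fixes d :: "'a \<Rightarrow> 'a \<Rightarrow> real" and k n :: nat and \<C> :: "'a set set"
    and x :: "nat \<Rightarrow> 'a" and T :: "nat \<Rightarrow> 'a set"
  assumes "distance_space d"
    and "k > 0"
    and "is_k_clustering k \<C>"
    and "nice d \<C>"
    and "inj_on x {1..n}"
    and "incr_run d k n x T"
  shows "\<forall>t \<le> n. card (T t) \<le> 2 ^ (k - 1) \<and>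
           (\<forall>C\<in>\<C>. C \<inter> x ` {1..t} \<noteq> {} \<longrightarrow> T t \<inter> C \<noteq> {})"
proof (intro allI impI)
  fix t assume "t \<le> n"
  have d_sym: "\<And>x y. d x y = d y x" using assms(1) unfolding distance_space_def by blast
  have run: "\<And>t. t \<in> {1..n} \<Longrightarrow> (let U = insert (x t) (T (t - 1)) in
      if card U > 2 ^ (k - 1) then candidates d k U (T t) else T t = U)"
    using assms(6) unfolding incr_run_def by blast
  show "card (T t) \<le> 2 ^ (k - 1) \<and> (\<forall>C\<in>\<C>. C \<inter> x ` {1..t} \<noteq> {} \<longrightarrow> T t \<inter> C \<noteq> {})"
    using \<open>t \<le> n\<close>
  proof (induction t)
    case 0
    then show ?case using assms(6) unfolding incr_run_def by simp
  next
    case (Suc t)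
    define U where "U = insert (x (Suc t)) (T t)"
    have "Suc t \<in> {1..n}" using Suc.prems by simp
    from run[OF this]
    have step: "if card U > 2 ^ (k - 1) then candidates d k U (T (Suc t)) else T (Suc t) = U"
      unfolding U_def Let_def diff_Suc_1 .
    have IH_hits: "\<forall>C\<in>\<C>. C \<inter> x ` {1..t} \<noteq> {} \<longrightarrow> T t \<inter> C \<noteq> {}"
      using Suc.IH Suc.prems by simp
    have "x ` {1..Suc t} = insert (x (Suc t)) (x ` {1..t})"
      by (auto simp: atLeastAtMostSuc_conv)
    then have U_hits: "\<forall>C\<in>\<C>. C \<inter> x ` {1..Suc t} \<noteq> {} \<longrightarrow> C \<inter> U \<noteq> {}"
      using IH_hits unfolding U_def by blast
    show ?case
    proof (cases "card U > 2 ^ (k - 1)")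
      case True
      then have "candidates d k U (T (Suc t))" using step by simp
      from candidates_correct[OF d_sym assms(2-4) this]
      have card: "card (T (Suc t)) \<le> 2 ^ (k - 1)"
        and hits: "\<forall>C\<in>\<C>. C \<inter> U \<noteq> {} \<longrightarrow> T (Suc t) \<inter> C \<noteq> {}"
        by simp_all
      have "T (Suc t) \<inter> C \<noteq> {}" if "C \<in> \<C>" "C \<inter> x ` {1..Suc t} \<noteq> {}" for C
        using hits[rule_format, OF that(1) U_hits[rule_format, OF that]] .
      then show ?thesis using card by blast
    next
      case False
      then show ?thesis using step U_hits by (simp add: Int_commute)
    qed
  qed
qed

end
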